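(* Let $A, B$ be sets with $\mathbf{P}(B) \subseteq \mathcal{P}(B)\setminus\{\varnothing\}$ a set of non-empty predicates on $B$, and let $R \subseteq A \times B$ be a relation. Then $R$ is belief-complete with respect to $\mathbf{P}(B)$ if and only if, for every set $C$, every set $\mathbf{P}(C)\subseteq\mathcal{P}(C)\setminus\{\varnothing\}$ of non-empty predicates on $C$, and every relation $S \subseteq B\times C$ such that (1) $S$ is assumption-complete with respect to $\mathbf{P}(C)$, and (2) $\boxplus_S p = \{ y\in B \mid S(y) = p\} \in \mathbf{P}(B)$ for every $p\in\mathbf{P}(C)$ (where $S(y)=\{z \mid S(y,z)\}$), the relational composite $R;S \subseteq A\times C$, given by $(R;S)(x,z)\iff\exists y.\,[R(x,y)\wedge S(y,z)]$, is assumption-complete with respect to $\mathbf{P}(C)$.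
   Context: A relation $R \subseteq X \times Y$ is assumption-complete with respect to a set $\mathbf{P}(Y)$ of subsets of $Y$ if for every $p \in \mathbf{P}(Y)$ there is $x \in X$ such that for all $y \in Y$: $R(x,y) \iff y \in p$. It is belief-complete with respect to $\mathbf{P}(Y)$ if for every $p \in \mathbf{P}(Y)$ there is $x \in X$ such that for all $y\in Y$, $R(x,y)\Rightarrow y\in p$, and moreover there exists $y$ with $R(x,y)$. *)

theory Defs
  imports Main
begin

definition assumption_complete :: "'a set \<Rightarrow> 'b set \<Rightarrow> ('a \<times> 'b) set \<Rightarrow> 'b set set \<Rightarrow> bool" where
  "assumption_complete X Y R P \<longleftrightarrow>
     (\<forall>p\<in>P. \<exists>x\<in>X. \<forall>y\<in>Y. (x, y) \<in> R \<longleftrightarrow> y \<in> p)"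

definition belief_complete :: "'a set \<Rightarrow> 'b set \<Rightarrow> ('a \<times> 'b) set \<Rightarrow> 'b set set \<Rightarrow> bool" where
  "belief_complete X Y R P \<longleftrightarrow>
     (\<forall>p\<in>P. \<exists>x\<in>X. (\<forall>y\<in>Y. (x, y) \<in> R \<longrightarrow> y \<in> p) \<and> (\<exists>y. (x, y) \<in> R))"

definition box_plus :: "'b set \<Rightarrow> ('b \<times> 'c) set \<Rightarrow> 'c set \<Rightarrow> 'b set" where
  "box_plus B S p = {y \<in> B. {z. (y, z) \<in> S} = p}"

end

theory Submission
  imports Defs
begin

text \<open>If every box_plus B S p is believable, a witness x believing it reaches, through any
y with (x, y) \<in> R, exactly the S-image p; so x assumes p in R O S. Conversely, for p \<in> PB the
two-valued relation sending p to u and B - p to v has box_plus B S {u} = p, and an assumption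
of {u} in R O S is precisely a belief in p.\<close>

lemma assumption_complete_relcomp_if_belief_complete:
  assumes bc: "belief_complete A B R PB"
    and R: "R \<subseteq> A \<times> B"
    and box_plus_in: "\<forall>p\<in>PC. box_plus B S p \<in> PB"
  shows "assumption_complete A C (R O S) PC"
  unfolding assumption_complete_def
proof
  fix p assume "p \<in> PC"
  with box_plus_in bc obtain x where "x \<in> A"
      and believes: "\<forall>y\<in>B. (x, y) \<in> R \<longrightarrow> y \<in> box_plus B S p"
      and "\<exists>y. (x, y) \<in> R"
    unfolding belief_complete_def by blast
  then obtain y0 where "(x, y0) \<in> R" by blast
  with R believes have "{z. (y0, z) \<in> S} = p"
    unfolding box_plus_def by blast
  with \<open>(x, y0) \<in> R\<close> have "z \<in> p \<Longrightarrow> (x, z) \<in> R O S" for z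
    by blast
  moreover have "(x, z) \<in> R O S \<Longrightarrow> z \<in> p" for z
    using believes R unfolding box_plus_def by blast
  ultimately show "\<exists>x\<in>A. \<forall>z\<in>C. (x, z) \<in> R O S \<longleftrightarrow> z \<in> p"
    using \<open>x \<in> A\<close> by blast
qed

definition indicator_relation :: "'b set \<Rightarrow> 'b set \<Rightarrow> 'c \<Rightarrow> 'c \<Rightarrow> ('b \<times> 'c) set" where
  "indicator_relation B p u v = p \<times> {u} \<union> (B - p) \<times> {v}"

lemma indicator_relation_subset: "p \<subseteq> B \<Longrightarrow> indicator_relation B p u v \<subseteq> B \<times> {u, v}"
  unfolding indicator_relation_def by auto

lemma assumption_complete_indicator_relation:
  "p \<subseteq> B \<Longrightarrow> p \<noteq> {} \<Longrightarrow> u \<noteq> v \<Longrightarrow>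
    assumption_complete B {u, v} (indicator_relation B p u v) {{u}}"
  unfolding assumption_complete_def indicator_relation_def by auto

lemma box_plus_indicator_relation:
  "p \<subseteq> B \<Longrightarrow> u \<noteq> v \<Longrightarrow> box_plus B (indicator_relation B p u v) {u} = p"
  unfolding box_plus_def indicator_relation_def by auto

lemma believes_if_assumes_relcomp_indicator_relation:
  assumes "u \<noteq> v"
    and assumes_u: "\<forall>z\<in>{u, v}. (x, z) \<in> R O indicator_relation B p u v \<longleftrightarrow> z \<in> {u}"
  shows "(\<forall>y\<in>B. (x, y) \<in> R \<longrightarrow> y \<in> p) \<and> (\<exists>y. (x, y) \<in> R)"
proof
  have "(x, v) \<notin> R O indicator_relation B p u v"
    using assumes_u \<open>u \<noteq> v\<close> by simp
  then show "\<forall>y\<in>B. (x, y) \<in> R \<longrightarrow> y \<in> p"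
    unfolding indicator_relation_def by blast
  have "(x, u) \<in> R O indicator_relation B p u v"
    using assumes_u by simp
  then show "\<exists>y. (x, y) \<in> R"
    by blast
qed

lemma belief_complete_if_relcomp_assumption_complete:
  assumes PB: "PB \<subseteq> Pow B - {{}}" and "u \<noteq> v"
    and H: "\<And>PC S. PC \<subseteq> Pow {u, v} - {{}} \<Longrightarrow> S \<subseteq> B \<times> {u, v} \<Longrightarrow>
      assumption_complete B {u, v} S PC \<Longrightarrow> \<forall>p\<in>PC. box_plus B S p \<in> PB \<Longrightarrow>
      assumption_complete A {u, v} (R O S) PC"
  shows "belief_complete A B R PB"
  unfolding belief_complete_def
proof
  fix p assume "p \<in> PB"
  with PB have "p \<subseteq> B" "p \<noteq> {}" by auto
  have "box_plus B (indicator_relation B p u v) {u} \<in> PB"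
    using \<open>p \<in> PB\<close> by (simp only: box_plus_indicator_relation[OF \<open>p \<subseteq> B\<close> \<open>u \<noteq> v\<close>])
  then have "assumption_complete A {u, v} (R O indicator_relation B p u v) {{u}}"
    using \<open>p \<subseteq> B\<close> \<open>p \<noteq> {}\<close> \<open>u \<noteq> v\<close>
    by (intro H indicator_relation_subset assumption_complete_indicator_relation; simp)
  then obtain x where "x \<in> A"
      and "\<forall>z\<in>{u, v}. (x, z) \<in> R O indicator_relation B p u v \<longleftrightarrow> z \<in> {u}"
    unfolding assumption_complete_def by (meson insertI1)
  then show "\<exists>x\<in>A. (\<forall>y\<in>B. (x, y) \<in> R \<longrightarrow> y \<in> p) \<and> (\<exists>y. (x, y) \<in> R)"
    using believes_if_assumes_relcomp_indicator_relation[OF \<open>u \<noteq> v\<close>] by (intro bexI)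
qed

theorem theorem1:
  fixes A :: "'a set" and B :: "'b set" and PB :: "'b set set" and R :: "('a \<times> 'b) set"
  assumes "PB \<subseteq> Pow B - {{}}"
    and "R \<subseteq> A \<times> B"
    and "\<exists>u v :: 'c. u \<noteq> v"
  shows "belief_complete A B R PB \<longleftrightarrow>
    (\<forall>(C :: 'c set) (PC :: 'c set set) (S :: ('b \<times> 'c) set).
        PC \<subseteq> Pow C - {{}} \<longrightarrow> S \<subseteq> B \<times> C \<longrightarrow>
        assumption_complete B C S PC \<longrightarrow>
        (\<forall>p\<in>PC. box_plus B S p \<in> PB) \<longrightarrow>
        assumption_complete A C (R O S) PC)"
proof (intro iffI allI impI)
  fix C :: "'c set" and PC and S :: "('b \<times> 'c) set"
  assume "belief_complete A B R PB" and "\<forall>p\<in>PC. box_plus B S p \<in> PB"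
  from this(1) assms(2) this(2) show "assumption_complete A C (R O S) PC"
    by (rule assumption_complete_relcomp_if_belief_complete)
next
  obtain u v :: 'c where "u \<noteq> v" using assms(3) by blast
  assume H: "\<forall>(C :: 'c set) PC (S :: ('b \<times> 'c) set). PC \<subseteq> Pow C - {{}} \<longrightarrow> S \<subseteq> B \<times> C \<longrightarrow>
        assumption_complete B C S PC \<longrightarrow> (\<forall>p\<in>PC. box_plus B S p \<in> PB) \<longrightarrow>
        assumption_complete A C (R O S) PC"
  show "belief_complete A B R PB"
    by (rule belief_complete_if_relcomp_assumption_complete[OF assms(1) \<open>u \<noteq> v\<close>])
      (simp add: H)
qed

end
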